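(* Let $N=\{1,\dots,n\}$ and let $F:2^N\to\mathbb{R}$ be quasi-submodular. Suppose the maximization procedure (described in the context) outputs the lattice $[X_+,Y_+]$. Then every local maximum $P$ of $F$ satisfies $X_+\subseteq P\subseteq Y_+$.
   Context: For $A\subseteq N$ and $i\in N$, write $A+i=A\cup\{i\}$, $A-i=A\setminus\{i\}$, and $F(i\mid A)=F(A+i)-F(A)$. $F$ is quasi-submodular if for all $X,Y\subseteq N$ both hold: $F(X\cap Y)\ge F(X)\Rightarrow F(Y)\ge F(X\cup Y)$, and $F(X\cap Y)>F(X)\Rightarrow F(Y)>F(X\cup Y)$. A set $X\subseteq N$ is a local maximum of $F$ if $F(X-i)\le F(X)$ for all $i\in X$ and $F(X+j)\le F(X)$ for all $j\in N\setminus X$. Maximization procedure: set $X_0=\emptyset$, $Y_0=N$; for $t=0,1,2,\dots$: let $U_t=\{u\in Y_t\setminus X_t: F(u\mid Y_t-u)>0\}$ and $X_{t+1}=X_t\cup U_t$; let $D_t=\{d\in Y_t\setminus X_t: F(d\mid X_t)<0\}$ and $Y_{t+1}=Y_t\setminus D_t$; if $X_{t+1}=X_t$ and $Y_{t+1}=Y_t$, stop and output the lattice $[X_t,Y_t]=\{U: X_t\subseteq U\subseteq Y_t\}$; otherwise continue with $t+1$. *)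

theory Defs
  imports Complex_Main
begin

definition marg :: "('a set \<Rightarrow> real) \<Rightarrow> 'a \<Rightarrow> 'a set \<Rightarrow> real" where
  "marg F i A = F (insert i A) - F A"

definition quasi_submodular :: "'a set \<Rightarrow> ('a set \<Rightarrow> real) \<Rightarrow> bool" where
  "quasi_submodular N F \<longleftrightarrow>
     (\<forall>X Y. X \<subseteq> N \<longrightarrow> Y \<subseteq> N \<longrightarrow>
        (F (X \<inter> Y) \<ge> F X \<longrightarrow> F Y \<ge> F (X \<union> Y)) \<and>
        (F (X \<inter> Y) > F X \<longrightarrow> F Y > F (X \<union> Y)))"

definition local_max :: "'a set \<Rightarrow> ('a set \<Rightarrow> real) \<Rightarrow> 'a set \<Rightarrow> bool" where
  "local_max N F X \<longleftrightarrow> X \<subseteq> N \<and>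
     (\<forall>i\<in>X. F (X - {i}) \<le> F X) \<and>
     (\<forall>j\<in>N - X. F (insert j X) \<le> F X)"

definition max_step :: "('a set \<Rightarrow> real) \<Rightarrow> 'a set \<times> 'a set \<Rightarrow> 'a set \<times> 'a set" where
  "max_step F XY = (let X = fst XY; Y = snd XY;
       U = {u \<in> Y - X. marg F u (Y - {u}) > 0};
       D = {d \<in> Y - X. marg F d X < 0}
     in (X \<union> U, Y - D))"

definition max_iter :: "'a set \<Rightarrow> ('a set \<Rightarrow> real) \<Rightarrow> nat \<Rightarrow> 'a set \<times> 'a set" where
  "max_iter N F t = (max_step F ^^ t) ({}, N)"

definition max_output :: "'a set \<Rightarrow> ('a set \<Rightarrow> real) \<Rightarrow> 'a set \<Rightarrow> 'a set \<Rightarrow> bool" where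
  "max_output N F Xp Yp \<longleftrightarrow>
     (\<exists>t. max_iter N F t = (Xp, Yp) \<and> max_step F (Xp, Yp) = (Xp, Yp) \<and>
          (\<forall>s<t. max_step F (max_iter N F s) \<noteq> max_iter N F s))"

end

theory Submission
  imports Defs
begin

text \<open>Both update rules are justified by quasi-submodularity applied to a pair whose
  intersection and union are the two sides of a local-optimality test at P. If u has
  positive gain with respect to Y - u but were not in P, the pair (P + u, Y - u) would
  transfer the inequality F(P) \<ge> F(P + u) to F(Y - u) \<ge> F(Y). If d has negative gain
  with respect to X but were in P, the pair (X + d, P - d) would transfer
  F(X) > F(X + d) to F(P - d) > F(P). Hence every local maximum stays between X_t and
  Y_t throughout the procedure.\<close>

lemma local_max_contains_gain_element:
  assumes qs: "quasi_submodular N F" and lm: "local_max N F P"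
    and "P \<subseteq> Y" "Y \<subseteq> N" "u \<in> Y" and gain: "marg F u (Y - {u}) > 0"
  shows "u \<in> P"
proof (rule ccontr)
  assume u_notin: "u \<notin> P"
  have "F (insert u P) \<le> F P"
    using lm u_notin assms(4,5) unfolding local_max_def by blast
  moreover have "insert u P \<inter> (Y - {u}) = P" "insert u P \<union> (Y - {u}) = Y"
    using assms(3,5) u_notin by blast+
  moreover have "insert u P \<subseteq> N" "Y - {u} \<subseteq> N"
    using assms(3-5) by auto
  ultimately have "F Y \<le> F (Y - {u})"
    using qs unfolding quasi_submodular_def by metis
  moreover have "insert u (Y - {u}) = Y"
    using assms(5) by blast
  ultimately show False
    using gain unfolding marg_def by simp
qed

lemma local_max_avoids_loss_element:
  assumes qs: "quasi_submodular N F" and lm: "local_max N F P"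
    and "X \<subseteq> P" "d \<notin> X" and loss: "marg F d X < 0"
  shows "d \<notin> P"
proof
  assume d_in: "d \<in> P"
  have P_sub: "P \<subseteq> N"
    using lm unfolding local_max_def by blast
  have "F (P - {d}) \<le> F P"
    using lm d_in unfolding local_max_def by blast
  moreover have "insert d X \<inter> (P - {d}) = X" "insert d X \<union> (P - {d}) = P"
    using assms(3,4) d_in by blast+
  moreover have "insert d X \<subseteq> N" "P - {d} \<subseteq> N"
    using P_sub assms(3) d_in by auto
  moreover have "F (insert d X) < F X"
    using loss unfolding marg_def by simp
  ultimately show False
    using qs unfolding quasi_submodular_def by (metis not_le)
qed

lemma max_step_preserves_bracket:
  assumes "quasi_submodular N F" "local_max N F P"
    and "X \<subseteq> P" "P \<subseteq> Y" "Y \<subseteq> N"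
  shows "fst (max_step F (X, Y)) \<subseteq> P \<and> P \<subseteq> snd (max_step F (X, Y))
    \<and> snd (max_step F (X, Y)) \<subseteq> N"
  using assms local_max_contains_gain_element[OF assms(1,2,4,5)]
    local_max_avoids_loss_element[OF assms(1,2,3)]
  unfolding max_step_def Let_def by auto

lemma max_iter_brackets_local_max:
  assumes "quasi_submodular N F" "local_max N F P"
  shows "fst (max_iter N F t) \<subseteq> P \<and> P \<subseteq> snd (max_iter N F t)
    \<and> snd (max_iter N F t) \<subseteq> N"
proof (induction t)
  case 0
  then show ?case
    using assms(2) unfolding local_max_def max_iter_def by simp
next
  case (Suc t)
  have "max_iter N F (Suc t) = max_step F (fst (max_iter N F t), snd (max_iter N F t))"
    by (simp add: max_iter_def)
  then show ?case
    using max_step_preserves_bracket[OF assms] Suc by presburger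
qed

theorem lemma8:
  fixes n :: nat and F :: "nat set \<Rightarrow> real" and Xp Yp P :: "nat set"
  assumes "quasi_submodular {1..n} F"
    and "max_output {1..n} F Xp Yp"
    and "local_max {1..n} F P"
  shows "Xp \<subseteq> P \<and> P \<subseteq> Yp"
proof -
  obtain t where "max_iter {1..n} F t = (Xp, Yp)"
    using assms(2) unfolding max_output_def by blast
  then show ?thesis
    using max_iter_brackets_local_max[OF assms(1,3), of t] by simp
qed

end
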